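(* Let $(M,s)$ be an $\mathbf{S5}$-state such that every $u\in M[S]$ is reachable from $s$, let $i$ be an agent and $\psi$ a fluent formula. Then $(M,s)\models\mathbf C(\neg\mathbf B_i\psi\wedge\neg\mathbf B_i\neg\psi)$ iff for every $u\in M[S]$ there exists $v\in M[S]$ with $(u,v)\in M[i]$ such that $\psi$ has different truth values in $M[\pi](u)$ and $M[\pi](v)$.
   Context: Agents $\mathcal{AG}=\{1,\dots,n\}$, fluents $\mathcal F$. Belief formulae are built from propositional (fluent) formulae over $\mathcal F$ with $\mathbf B_i$, Boolean connectives, $\mathbf E_\alpha,\mathbf C_\alpha$; $\mathbf C=\mathbf C_{\mathcal{AG}}$. Kripke structures $M$: worlds $M[S]$, interpretations $M[\pi](u)\subseteq\mathcal F$, relations $M[i]$; standard semantics ($\mathbf B_i\varphi$: $\varphi$ at all $M[i]$-successors; $\mathbf E_\alpha\varphi$: all $\mathbf B_i\varphi$, $i\in\alpha$; $\mathbf C_\alpha\varphi$: $\mathbf E_\alpha^k\varphi$ for all $k\ge0$). $(M,s)$ is an $\mathbf{S5}$-state if each $M[i]$ is an equivalence relation. $v$ is reachable from $u$ if connected to it by a finite (possibly empty) chain of pairs each in some $M[j]$. *)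

theory Defs
  imports Main
begin

datatype 'f fform =
    FAtom 'f
  | FTop
  | FNot "'f fform"
  | FAnd "'f fform" "'f fform"
  | FOr "'f fform" "'f fform"

(* Belief formulae; agents are natural numbers 1..n *)
datatype 'f bform =
    BFl "'f fform"
  | BB nat "'f bform"
  | BNot "'f bform"
  | BAnd "'f bform" "'f bform"
  | BOr "'f bform" "'f bform"
  | BE "nat set" "'f bform"
  | BC "nat set" "'f bform"

fun fsat :: "'f set \<Rightarrow> 'f fform \<Rightarrow> bool" where
  "fsat I (FAtom p) = (p \<in> I)"
| "fsat I FTop = True"
| "fsat I (FNot \<phi>) = (\<not> fsat I \<phi>)"
| "fsat I (FAnd \<phi> \<psi>) = (fsat I \<phi> \<and> fsat I \<psi>)"
| "fsat I (FOr \<phi> \<psi>) = (fsat I \<phi> \<or> fsat I \<psi>)"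

(* Kripke structure: worlds M[S], interpretation M[pi], relations M[i] *)
record ('w, 'f) kripke =
  worlds :: "'w set"
  interp :: "'w \<Rightarrow> 'f set"
  rel :: "nat \<Rightarrow> ('w \<times> 'w) set"

fun Epow :: "nat set \<Rightarrow> nat \<Rightarrow> 'f bform \<Rightarrow> 'f bform" where
  "Epow \<alpha> 0 \<phi> = \<phi>"
| "Epow \<alpha> (Suc k) \<phi> = BE \<alpha> (Epow \<alpha> k \<phi>)"

fun bsize :: "'f bform \<Rightarrow> nat" where
  "bsize (BFl _) = 1"
| "bsize (BB _ \<phi>) = Suc (bsize \<phi>)"
| "bsize (BNot \<phi>) = Suc (bsize \<phi>)"
| "bsize (BAnd \<phi> \<psi>) = Suc (bsize \<phi> + bsize \<psi>)"
| "bsize (BOr \<phi> \<psi>) = Suc (bsize \<phi> + bsize \<psi>)"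
| "bsize (BE _ \<phi>) = Suc (bsize \<phi>)"
| "bsize (BC _ \<phi>) = Suc (bsize \<phi>)"

fun ncount :: "'f bform \<Rightarrow> nat" where
  "ncount (BFl _) = 0"
| "ncount (BB _ \<phi>) = ncount \<phi>"
| "ncount (BNot \<phi>) = ncount \<phi>"
| "ncount (BAnd \<phi> \<psi>) = ncount \<phi> + ncount \<psi>"
| "ncount (BOr \<phi> \<psi>) = ncount \<phi> + ncount \<psi>"
| "ncount (BE _ \<phi>) = ncount \<phi>"
| "ncount (BC _ \<phi>) = Suc (ncount \<phi>)"

lemma ncount_Epow: "ncount (Epow \<alpha> k \<phi>) = ncount \<phi>"
  by (induction k) auto

function sat :: "('w, 'f) kripke \<Rightarrow> 'w \<Rightarrow> 'f bform \<Rightarrow> bool" where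
  "sat M u (BFl \<phi>) = fsat (interp M u) \<phi>"
| "sat M u (BB i \<phi>) = (\<forall>v. (u, v) \<in> rel M i \<longrightarrow> sat M v \<phi>)"
| "sat M u (BNot \<phi>) = (\<not> sat M u \<phi>)"
| "sat M u (BAnd \<phi> \<psi>) = (sat M u \<phi> \<and> sat M u \<psi>)"
| "sat M u (BOr \<phi> \<psi>) = (sat M u \<phi> \<or> sat M u \<psi>)"
| "sat M u (BE \<alpha> \<phi>) = (\<forall>i\<in>\<alpha>. \<forall>v. (u, v) \<in> rel M i \<longrightarrow> sat M v \<phi>)"
| "sat M u (BC \<alpha> \<phi>) = (\<forall>k. sat M u (Epow \<alpha> k \<phi>))"
  by pat_completeness auto
termination
  by (relation "measures [\<lambda>(M, u, \<phi>). ncount \<phi>, \<lambda>(M, u, \<phi>). bsize \<phi>]")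
     (auto simp: ncount_Epow)

definition agents :: "nat \<Rightarrow> nat set" where
  "agents n = {1..n}"

definition S5_state :: "nat \<Rightarrow> ('w, 'f) kripke \<Rightarrow> 'w \<Rightarrow> bool" where
  "S5_state n M s \<longleftrightarrow> s \<in> worlds M \<and> (\<forall>i\<in>agents n. equiv (worlds M) (rel M i))"

definition reachable :: "nat \<Rightarrow> ('w, 'f) kripke \<Rightarrow> 'w \<Rightarrow> 'w \<Rightarrow> bool" where
  "reachable n M u v \<longleftrightarrow> (u, v) \<in> (\<Union>j\<in>agents n. rel M j)\<^sup>*"

end

theory Submission
  imports Defs
begin

text \<open>The common-belief operator quantifies over all worlds reachable from the actual one, and all
worlds are reachable. At a single world, reflexivity of \<open>M[i]\<close> makes the world itself one of its
\<open>i\<close>-successors, so "some successor satisfies \<open>\<psi>\<close> and some successor violates it" is the same as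
"some successor disagrees with the world on \<open>\<psi>\<close>".\<close>

lemma sat_Epow_iff:
  "sat M u (Epow \<alpha> k \<phi>) \<longleftrightarrow> (\<forall>v. (u, v) \<in> (\<Union>j\<in>\<alpha>. rel M j) ^^ k \<longrightarrow> sat M v \<phi>)"
proof (induction k arbitrary: u)
  case 0
  then show ?case by simp
next
  case (Suc k)
  show ?case
    unfolding Epow.simps sat.simps Suc
    by (blast dest: relpow_Suc_D2 intro: relpow_Suc_I2)
qed

lemma sat_BC_iff:
  "sat M u (BC \<alpha> \<phi>) \<longleftrightarrow> (\<forall>v. (u, v) \<in> (\<Union>j\<in>\<alpha>. rel M j)\<^sup>* \<longrightarrow> sat M v \<phi>)"
  by (simp add: sat_Epow_iff rtrancl_power) blast

lemma rtrancl_stays_in: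
  assumes "R \<subseteq> A \<times> A" and "a \<in> A" and "(a, b) \<in> R\<^sup>*"
  shows "b \<in> A"
  using assms(3,2,1) by (induction rule: rtrancl_induct) auto

lemma reachable_eq_worlds:
  assumes "S5_state n M s" and "\<forall>u\<in>worlds M. reachable n M s u"
  shows "{v. (s, v) \<in> (\<Union>j\<in>agents n. rel M j)\<^sup>*} = worlds M"
proof -
  have "(\<Union>j\<in>agents n. rel M j) \<subseteq> worlds M \<times> worlds M" and "s \<in> worlds M"
    using assms(1) equiv_type by (fastforce simp: S5_state_def)+
  then show ?thesis
    using assms(2) rtrancl_stays_in by (auto simp: reachable_def)
qed

lemma sat_uncertain_iff_disagreeing_successor:
  assumes "rel M i \<subseteq> worlds M \<times> worlds M" and "refl_on (worlds M) (rel M i)"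
    and "u \<in> worlds M"
  shows "sat M u (BAnd (BNot (BB i (BFl \<psi>))) (BNot (BB i (BFl (FNot \<psi>)))))
     \<longleftrightarrow> (\<exists>v\<in>worlds M. (u, v) \<in> rel M i \<and> fsat (interp M u) \<psi> \<noteq> fsat (interp M v) \<psi>)"
proof -
  have "(u, u) \<in> rel M i"
    using assms(2,3) by (simp add: refl_on_def)
  then show ?thesis
    using assms(1) by auto
qed

theorem lemma10:
  fixes n :: nat and M :: "('w, 'f) kripke" and s :: 'w and i :: nat and \<psi> :: "'f fform"
  assumes "S5_state n M s"
    and "\<forall>u\<in>worlds M. reachable n M s u"
    and "i \<in> agents n"
  shows "sat M s (BC (agents n) (BAnd (BNot (BB i (BFl \<psi>))) (BNot (BB i (BFl (FNot \<psi>))))))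
     \<longleftrightarrow> (\<forall>u\<in>worlds M. \<exists>v\<in>worlds M. (u, v) \<in> rel M i \<and>
              fsat (interp M u) \<psi> \<noteq> fsat (interp M v) \<psi>)"
proof -
  have "equiv (worlds M) (rel M i)"
    using assms(1,3) by (simp add: S5_state_def)
  then have "u \<in> worlds M \<Longrightarrow>
      sat M u (BAnd (BNot (BB i (BFl \<psi>))) (BNot (BB i (BFl (FNot \<psi>)))))
      \<longleftrightarrow> (\<exists>v\<in>worlds M. (u, v) \<in> rel M i \<and> fsat (interp M u) \<psi> \<noteq> fsat (interp M v) \<psi>)"
    for u by (metis equivE sat_uncertain_iff_disagreeing_successor)
  moreover have "(s, u) \<in> (\<Union>j\<in>agents n. rel M j)\<^sup>* \<longleftrightarrow> u \<in> worlds M" for u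
    using reachable_eq_worlds[OF assms(1,2)] by blast
  ultimately show ?thesis
    unfolding sat_BC_iff by blast
qed

end
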